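(* Let $L$ be an invertible linear map of $\mathbb{C}^n$ with eigenvalues $\lambda_1,\dots,\lambda_n$ satisfying $0<|\lambda_1|<\dots<|\lambda_n|<1$. For every $r\ge 1$, \[ SR_r(L)+\mathrm{Im}(M_L^r)=\mathcal{H}^r, \] where $M_L^r:\mathcal{H}^r\to\mathcal{H}^r$ is $h\mapsto h\circ L-L\circ h$.
   Context: $E^{\lambda}(L)$ is the characteristic subspace of $L$ for the eigenvalue $\lambda$; here $\mathbb{C}^n=E^{\lambda_1}(L)\oplus\cdots\oplus E^{\lambda_n}(L)$. $\mathcal{H}^r$ is the vector space of homogeneous polynomial maps of degree $r$ from $\mathbb{C}^n$ to $\mathbb{C}^n$. A homogeneous polynomial map $Q$ with $Q(0)=0$ is of type $s=(s_1,\dots,s_n)$ if for all $a_1,\dots,a_n\in\mathbb{C}$ and $(t_1,\dots,t_n)\in E^{\lambda_1}(L)\times\cdots\times E^{\lambda_n}(L)$, $Q(a_1t_1+\dots+a_nt_n)=a_1^{s_1}\cdots a_n^{s_n}Q(t_1+\dots+t_n)$. A polynomial map $P$ with $P(0)=0$ is of sub-resonance type with respect to $L$ if for each $i$ its component $P_i:\mathbb{C}^n\to E^{\lambda_i}(L)$ consists only of homogeneous terms of types $s$ with $\ln|\lambda_i|\le\sum_j s_j\ln|\lambda_j|$. $SR_r(L)$ denotes the set of elements of $\mathcal{H}^r$ that are of sub-resonance type with respect to $L$. *)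

theory Defs
  imports "HOL-Analysis.Analysis"
begin

text \<open>C^n is modelled as complex^'n for a finite index type 'n (n = CARD('n));
  linear maps of C^n are matrices acting by *v.\<close>

definition is_eigenvalue :: "complex^'n^'n \<Rightarrow> complex \<Rightarrow> bool" where
  "is_eigenvalue L \<mu> \<longleftrightarrow> (\<exists>v. v \<noteq> 0 \<and> L *v v = \<mu> *s v)"

definition char_subspace :: "complex^'n^'n \<Rightarrow> complex \<Rightarrow> (complex^'n) set" where
  "char_subspace L \<mu> = {v. ((\<lambda>x. L *v x - \<mu> *s x) ^^ CARD('n)) v = 0}"

definition hom_poly :: "nat \<Rightarrow> (complex^'n \<Rightarrow> complex^'n) \<Rightarrow> bool" where
  "hom_poly r Q \<longleftrightarrow> (\<exists>c :: ('n \<Rightarrow> nat) \<Rightarrow> complex^'n.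
     \<forall>x. Q x = (\<Sum>\<alpha>\<in>{\<alpha>. sum \<alpha> UNIV = r}. (\<Prod>i\<in>UNIV. (x $ i) ^ \<alpha> i) *s c \<alpha>))"

definition Hr :: "nat \<Rightarrow> (complex^'n \<Rightarrow> complex^'n) set" where
  "Hr r = {Q. hom_poly r Q}"

definition of_type :: "complex^'n^'n \<Rightarrow> ('n \<Rightarrow> complex) \<Rightarrow> ('n \<Rightarrow> nat)
     \<Rightarrow> (complex^'n \<Rightarrow> complex^'n) \<Rightarrow> bool" where
  "of_type L lam s Q \<longleftrightarrow> Q 0 = 0 \<and>
     (\<forall>(a :: 'n \<Rightarrow> complex) (t :: 'n \<Rightarrow> complex^'n).
        (\<forall>j. t j \<in> char_subspace L (lam j)) \<longrightarrow>
        Q (\<Sum>j\<in>UNIV. a j *s t j) = (\<Prod>j\<in>UNIV. a j ^ s j) *s Q (\<Sum>j\<in>UNIV. t j))"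

definition subres_ok :: "('n \<Rightarrow> complex) \<Rightarrow> 'n \<Rightarrow> ('n \<Rightarrow> nat) \<Rightarrow> bool" where
  "subres_ok lam i s \<longleftrightarrow> ln (cmod (lam i)) \<le> (\<Sum>j\<in>UNIV. real (s j) * ln (cmod (lam j)))"

text \<open>SR_r(L): elements P of H^r such that, for each i, the component
  P_i : C^n \<rightarrow> E^{lam i}(L) (with P = sum_i P_i) is a sum of homogeneous
  polynomial terms Q i s of types s satisfying the sub-resonance condition.\<close>
definition SR :: "complex^'n^'n \<Rightarrow> ('n \<Rightarrow> complex) \<Rightarrow> nat \<Rightarrow> (complex^'n \<Rightarrow> complex^'n) set" where
  "SR L lam r = {P. P \<in> Hr r \<and>
     (\<exists>Q :: 'n \<Rightarrow> ('n \<Rightarrow> nat) \<Rightarrow> (complex^'n \<Rightarrow> complex^'n).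
        (\<forall>i s. Q i s \<in> Hr r \<and> of_type L lam s (Q i s) \<and>
               (\<forall>x. Q i s x \<in> char_subspace L (lam i))) \<and>
        (\<forall>x. P x = (\<Sum>i\<in>UNIV. \<Sum>s\<in>{s. sum s UNIV = r \<and> subres_ok lam i s}. Q i s x)))}"

definition MapM :: "complex^'n^'n \<Rightarrow> (complex^'n \<Rightarrow> complex^'n) \<Rightarrow> (complex^'n \<Rightarrow> complex^'n)" where
  "MapM L h = (\<lambda>x. h (L *v x) - L *v (h x))"

end

theory Submission imports Defs begin

(* Because the moduli |lambda_i| are distinct, L is diagonalisable. In the coordinates y = W x
   of an eigenbasis v_1, ..., v_n, every Q in H^r is a combination of the eigen-monomials
   y^s v_i with |s| = r; each of them is of type s with values in E^{lambda_i}(L), and M_L acts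
   on it as multiplication by lambda^s - lambda_i. If the pair (i, s) violates the
   sub-resonance inequality then |lambda^s| < |lambda_i|, so lambda^s - lambda_i is invertible
   and the term lies in the image of M_L; the remaining terms form an element of SR_r(L). *)

definition monom :: "('n::finite \<Rightarrow> nat) \<Rightarrow> 'a::comm_semiring_1^'n \<Rightarrow> 'a" where
  "monom \<alpha> x = (\<Prod>i\<in>UNIV. (x $ i) ^ \<alpha> i)"

definition scalar_hom_poly :: "nat \<Rightarrow> ('a::comm_semiring_1^'n::finite \<Rightarrow> 'a) \<Rightarrow> bool" where
  "scalar_hom_poly r f \<longleftrightarrow>
     (\<exists>c. \<forall>x. f x = (\<Sum>\<alpha>\<in>{\<alpha>. sum \<alpha> UNIV = r}. c \<alpha> * monom \<alpha> x))"

lemma finite_multi_indices: "finite {\<alpha>::'n::finite \<Rightarrow> nat. sum \<alpha> UNIV = r}"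
proof (rule finite_subset)
  show "{\<alpha>::'n \<Rightarrow> nat. sum \<alpha> UNIV = r} \<subseteq> {\<alpha>. \<forall>i. \<alpha> i \<in> {..r}}"
    by (auto intro: member_le_sum)
  show "finite {\<alpha>::'n \<Rightarrow> nat. \<forall>i. \<alpha> i \<in> {..r}}"
    using finite_set_of_finite_funs[of "UNIV::'n set" "{..r}" 0] by simp
qed

lemma sum_Collect_conj_split:
  "finite {x. P x} \<Longrightarrow> sum f {x. P x} = sum f {x. P x \<and> Q x} + sum f {x. P x \<and> \<not> Q x}"
  by (subst sum.Int_Diff[of _ _ "{x. Q x}"]) (simp_all add: Int_def set_diff_eq)

lemma monom_add: "monom (\<lambda>i. \<alpha> i + \<beta> i) x = monom \<alpha> x * monom \<beta> x"
  unfolding monom_def by (simp add: power_add prod.distrib)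

lemma monom_indicator: "monom (\<lambda>i. if i = k then 1 else 0) x = x $ k"
  unfolding monom_def by (simp add: if_distrib prod.delta cong: if_cong)

lemma scalar_hom_poly_zero: "scalar_hom_poly r (\<lambda>_. 0)"
  unfolding scalar_hom_poly_def by (rule exI[of _ "\<lambda>_. 0"]) simp

lemma scalar_hom_poly_add:
  assumes "scalar_hom_poly r f" "scalar_hom_poly r g"
  shows "scalar_hom_poly r (\<lambda>x. f x + g x)"
proof -
  obtain c where c: "\<And>x. f x = (\<Sum>\<alpha>\<in>{\<alpha>. sum \<alpha> UNIV = r}. c \<alpha> * monom \<alpha> x)"
    using assms(1) unfolding scalar_hom_poly_def by blast
  obtain d where d: "\<And>x. g x = (\<Sum>\<alpha>\<in>{\<alpha>. sum \<alpha> UNIV = r}. d \<alpha> * monom \<alpha> x)"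
    using assms(2) unfolding scalar_hom_poly_def by blast
  show ?thesis unfolding scalar_hom_poly_def
    by (intro exI[of _ "\<lambda>\<alpha>. c \<alpha> + d \<alpha>"]) (simp add: c d distrib_right sum.distrib)
qed

lemma scalar_hom_poly_scale:
  assumes "scalar_hom_poly r f" shows "scalar_hom_poly r (\<lambda>x. a * f x)"
proof -
  obtain c where "\<And>x. f x = (\<Sum>\<alpha>\<in>{\<alpha>. sum \<alpha> UNIV = r}. c \<alpha> * monom \<alpha> x)"
    using assms unfolding scalar_hom_poly_def by blast
  then show ?thesis unfolding scalar_hom_poly_def
    by (intro exI[of _ "\<lambda>\<alpha>. a * c \<alpha>"]) (simp add: sum_distrib_left mult.assoc)
qed

lemma scalar_hom_poly_sum:
  "finite S \<Longrightarrow> (\<And>j. j \<in> S \<Longrightarrow> scalar_hom_poly r (g j))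
    \<Longrightarrow> scalar_hom_poly r (\<lambda>x. \<Sum>j\<in>S. g j x)"
  by (induction S rule: finite_induct) (auto intro: scalar_hom_poly_zero scalar_hom_poly_add)

lemma scalar_hom_poly_monom: "scalar_hom_poly (sum \<alpha> UNIV) (monom \<alpha>)"
  unfolding scalar_hom_poly_def
  by (rule exI[of _ "\<lambda>\<beta>. if \<beta> = \<alpha> then 1 else 0"])
    (simp add: finite_multi_indices if_distrib[where f="\<lambda>c. c * _"] cong: if_cong)

lemma scalar_hom_poly_one: "scalar_hom_poly 0 (\<lambda>_::'a::comm_semiring_1^'n::finite. 1::'a)"
proof -
  have "scalar_hom_poly (sum (\<lambda>_::'n. 0) UNIV) (monom (\<lambda>_::'n. 0) :: 'a^'n \<Rightarrow> 'a)"
    by (rule scalar_hom_poly_monom)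
  then show ?thesis by (simp add: monom_def[abs_def])
qed

lemma scalar_hom_poly_mult:
  fixes f g :: "'a::comm_semiring_1^'n::finite \<Rightarrow> 'a"
  assumes "scalar_hom_poly m f" "scalar_hom_poly n g"
  shows "scalar_hom_poly (m + n) (\<lambda>x. f x * g x)"
proof -
  obtain c where c: "\<And>x. f x = (\<Sum>\<alpha>\<in>{\<alpha>. sum \<alpha> UNIV = m}. c \<alpha> * monom \<alpha> x)"
    using assms(1) unfolding scalar_hom_poly_def by blast
  obtain d where d: "\<And>x. g x = (\<Sum>\<beta>\<in>{\<beta>. sum \<beta> UNIV = n}. d \<beta> * monom \<beta> x)"
    using assms(2) unfolding scalar_hom_poly_def by blast
  have "f x * g x = (\<Sum>\<alpha>\<in>{\<alpha>. sum \<alpha> UNIV = m}. \<Sum>\<beta>\<in>{\<beta>. sum \<beta> UNIV = n}.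
          (c \<alpha> * d \<beta>) * monom (\<lambda>i. \<alpha> i + \<beta> i) x)" for x
  proof -
    have "f x * g x = (\<Sum>\<alpha>\<in>{\<alpha>. sum \<alpha> UNIV = m}. \<Sum>\<beta>\<in>{\<beta>. sum \<beta> UNIV = n}.
            (c \<alpha> * monom \<alpha> x) * (d \<beta> * monom \<beta> x))"
      unfolding c d by (rule sum_product)
    then show ?thesis by (simp only: monom_add mult_ac)
  qed
  moreover have "scalar_hom_poly (m + n) (\<lambda>x. \<Sum>\<alpha>\<in>{\<alpha>. sum \<alpha> UNIV = m}. \<Sum>\<beta>\<in>{\<beta>. sum \<beta> UNIV = n}.
          (c \<alpha> * d \<beta>) * monom (\<lambda>i. \<alpha> i + \<beta> i) x)"
  proof (intro scalar_hom_poly_sum finite_multi_indices scalar_hom_poly_scale)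
    fix \<alpha> \<beta> :: "'n \<Rightarrow> nat" assume "\<alpha> \<in> {\<alpha>. sum \<alpha> UNIV = m}" "\<beta> \<in> {\<beta>. sum \<beta> UNIV = n}"
    then have "sum (\<lambda>i. \<alpha> i + \<beta> i) UNIV = m + n" by (simp add: sum.distrib)
    then show "scalar_hom_poly (m + n) (monom (\<lambda>i. \<alpha> i + \<beta> i))"
      using scalar_hom_poly_monom by metis
  qed
  ultimately show ?thesis by simp
qed

lemma scalar_hom_poly_power:
  assumes "scalar_hom_poly d f" shows "scalar_hom_poly (d * e) (\<lambda>x. f x ^ e)"
proof (induction e)
  case 0 then show ?case using scalar_hom_poly_one by simp
next
  case (Suc e)
  then show ?case using scalar_hom_poly_mult[OF assms Suc] by simp
qed

lemma scalar_hom_poly_prod: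
  "finite S \<Longrightarrow> (\<And>i. i \<in> S \<Longrightarrow> scalar_hom_poly (d i) (f i))
    \<Longrightarrow> scalar_hom_poly (\<Sum>i\<in>S. d i) (\<lambda>x. \<Prod>i\<in>S. f i x)"
  by (induction S rule: finite_induct) (auto intro: scalar_hom_poly_one scalar_hom_poly_mult)

lemma scalar_hom_poly_linear_form: "scalar_hom_poly 1 (\<lambda>x. (A *v x) $ i)"
proof -
  have "scalar_hom_poly 1 (\<lambda>x. \<Sum>j\<in>UNIV. A $ i $ j * monom (\<lambda>l. if l = j then 1 else 0) x)"
    using scalar_hom_poly_monom[of "\<lambda>l. if l = _ then 1 else 0"]
    by (intro scalar_hom_poly_sum scalar_hom_poly_scale) auto
  then show ?thesis by (simp add: monom_indicator matrix_vector_mult_def)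
qed

lemma scalar_hom_poly_precompose_linear:
  assumes "scalar_hom_poly r f" shows "scalar_hom_poly r (\<lambda>x. f (A *v x))"
proof -
  obtain c where c: "\<And>x. f x = (\<Sum>\<alpha>\<in>{\<alpha>. sum \<alpha> UNIV = r}. c \<alpha> * monom \<alpha> x)"
    using assms unfolding scalar_hom_poly_def by blast
  have "scalar_hom_poly (sum \<alpha> UNIV) (\<lambda>x. monom \<alpha> (A *v x))" for \<alpha>
    unfolding monom_def using scalar_hom_poly_power[OF scalar_hom_poly_linear_form]
    by (intro scalar_hom_poly_prod) auto
  then show ?thesis unfolding c
    by (intro scalar_hom_poly_sum finite_multi_indices scalar_hom_poly_scale) auto
qed

lemma Hr_iff_components: "Q \<in> Hr r \<longleftrightarrow> (\<forall>k. scalar_hom_poly r (\<lambda>x. Q x $ k))"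
proof
  assume "Q \<in> Hr r"
  then obtain c where c: "\<And>x. Q x = (\<Sum>\<alpha>\<in>{\<alpha>. sum \<alpha> UNIV = r}. monom \<alpha> x *s c \<alpha>)"
    unfolding Hr_def hom_poly_def monom_def by blast
  show "\<forall>k. scalar_hom_poly r (\<lambda>x. Q x $ k)"
    unfolding scalar_hom_poly_def
    by (intro allI exI[of _ "\<lambda>\<alpha>. c \<alpha> $ _"]) (simp add: c sum_component mult.commute)
next
  assume "\<forall>k. scalar_hom_poly r (\<lambda>x. Q x $ k)"
  then obtain c where c: "\<And>k x. Q x $ k = (\<Sum>\<alpha>\<in>{\<alpha>. sum \<alpha> UNIV = r}. c k \<alpha> * monom \<alpha> x)"
    unfolding scalar_hom_poly_def by metis
  show "Q \<in> Hr r" unfolding Hr_def hom_poly_def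
    by (intro CollectI exI[of _ "\<lambda>\<alpha>. \<chi> k. c k \<alpha>"])
      (simp add: vec_eq_iff sum_component c monom_def mult.commute)
qed

lemma Hr_sum:
  "finite S \<Longrightarrow> (\<And>j. j \<in> S \<Longrightarrow> g j \<in> Hr r) \<Longrightarrow> (\<lambda>x. \<Sum>j\<in>S. g j x) \<in> Hr r"
  unfolding Hr_iff_components sum_component by (auto intro!: scalar_hom_poly_sum)

lemma Hr_zero: "(\<lambda>_. 0) \<in> Hr r"
  using Hr_sum[of "{}"] by simp

lemma Hr_add: "P \<in> Hr r \<Longrightarrow> G \<in> Hr r \<Longrightarrow> (\<lambda>x. P x + G x) \<in> Hr r"
  unfolding Hr_iff_components by (simp add: scalar_hom_poly_add)

lemma Hr_diff: "P \<in> Hr r \<Longrightarrow> G \<in> Hr r \<Longrightarrow> (\<lambda>x. P x - G x) \<in> Hr r"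
  unfolding Hr_iff_components using scalar_hom_poly_add scalar_hom_poly_scale[of r _ "-1"] by fastforce

lemma Hr_precompose_linear: "Q \<in> Hr r \<Longrightarrow> (\<lambda>x. Q (A *v x)) \<in> Hr r"
  unfolding Hr_iff_components using scalar_hom_poly_precompose_linear[of r "\<lambda>x. Q x $ _" A] by blast

lemma Hr_postcompose_linear: "Q \<in> Hr r \<Longrightarrow> (\<lambda>x. A *v Q x) \<in> Hr r"
  unfolding Hr_iff_components matrix_vector_mult_def
  by (auto intro!: scalar_hom_poly_sum scalar_hom_poly_scale)

lemma Hr_monom_precompose_linear:
  assumes "sum \<alpha> UNIV = r" shows "(\<lambda>x. monom \<alpha> (A *v x) *s w) \<in> Hr r"
  unfolding Hr_iff_components
proof
  fix k
  have "scalar_hom_poly r (\<lambda>x. w $ k * monom \<alpha> (A *v x))"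
    unfolding assms[symmetric]
    by (intro scalar_hom_poly_scale scalar_hom_poly_precompose_linear scalar_hom_poly_monom)
  then show "scalar_hom_poly r (\<lambda>x. (monom \<alpha> (A *v x) *s w) $ k)"
    by (simp add: mult.commute)
qed

lemma MapM_Hr: "h \<in> Hr r \<Longrightarrow> MapM L h \<in> Hr r"
  unfolding MapM_def by (intro Hr_diff Hr_precompose_linear Hr_postcompose_linear)

lemma MapM_sum: "MapM L (\<lambda>x. \<Sum>j\<in>S. f j x) = (\<lambda>x. \<Sum>j\<in>S. MapM L (f j) x)"
  unfolding MapM_def by (simp add: vec.sum sum_subtractf)

lemma eigenvectors_independent:
  fixes L :: "'a::field^'n::finite^'n"
  assumes eigenvector: "\<And>i. L *v v i = lam i *s v i" and nonzero: "\<And>i. v i \<noteq> 0"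
    and "inj lam" and "finite S" and "(\<Sum>j\<in>S. c j *s v j) = 0" and "j \<in> S"
  shows "c j = 0"
  using \<open>finite S\<close> assms(5,6)
proof (induction S arbitrary: c j rule: finite_induct)
  case empty then show ?case by simp
next
  case (insert a S)
  have sum0: "c a *s v a + (\<Sum>j\<in>S. c j *s v j) = 0" using insert by simp
  have "L *v (c a *s v a + (\<Sum>j\<in>S. c j *s v j)) - lam a *s (c a *s v a + (\<Sum>j\<in>S. c j *s v j)) = 0"
    by (simp add: sum0)
  then have combination: "(\<Sum>j\<in>S. (c j * (lam j - lam a)) *s v j) = 0"
    by (simp add: matrix_vector_right_distrib vec.sum vector_scalar_commute eigenvector
        vector_smult_assoc vector_add_ldistrib sum_cmul[symmetric] vector_sub_rdistrib
        sum_subtractf algebra_simps)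
  have "c j * (lam j - lam a) = 0" if "j \<in> S" for j using insert.IH[OF combination that] .
  moreover have "lam j \<noteq> lam a" if "j \<in> S" for j
    using insert.hyps that \<open>inj lam\<close> by (metis injD)
  ultimately have S0: "c j = 0" if "j \<in> S" for j using that by simp
  then have "c a *s v a = 0" using sum0 by simp
  then have "c a = 0" using nonzero[of a] by (metis vector_mul_eq_0)
  then show ?case using insert.prems S0 by auto
qed

lemma not_subres_ok_imp_nonresonant:
  fixes lam :: "'n::finite \<Rightarrow> complex"
  assumes "\<forall>j. lam j \<noteq> 0" and "\<not> subres_ok lam i s"
  shows "(\<Prod>j\<in>UNIV. lam j ^ s j) \<noteq> lam i"
proof
  assume eq: "(\<Prod>j\<in>UNIV. lam j ^ s j) = lam i"
  have "ln (cmod (lam i)) = (\<Sum>j\<in>UNIV. ln (cmod (lam j) ^ s j))"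
    unfolding eq[symmetric] prod_norm[symmetric] norm_power
    by (rule ln_prod) (use assms(1) in auto)
  also have "\<dots> = (\<Sum>j\<in>UNIV. real (s j) * ln (cmod (lam j)))"
    by (simp add: ln_realpow)
  finally show False using assms(2) unfolding subres_ok_def by simp
qed

lemma matrix_of_columns_mult:
  fixes v :: "'n::finite \<Rightarrow> 'a::comm_semiring_1^'m::finite"
  shows "(\<chi> k j. v j $ k) *v c = (\<Sum>j\<in>UNIV. c $ j *s v j)"
  by (simp add: vec_eq_iff matrix_vector_mult_def mult.commute)

locale eigenbasis =
  fixes L :: "complex^'n::finite^'n" and lam :: "'n \<Rightarrow> complex"
    and v :: "'n \<Rightarrow> complex^'n" and W :: "complex^'n^'n"
  assumes eigenvector: "L *v v i = lam i *s v i"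
    and inj_lam: "inj lam"
    and left_inverse: "W ** (\<chi> k j. v j $ k) = mat 1"
    and right_inverse: "(\<chi> k j. v j $ k) ** W = mat 1"

lemma eigenbasis_exists:
  fixes L :: "complex^'n::finite^'n"
  assumes "\<forall>i. is_eigenvalue L (lam i)" and "inj lam"
  obtains v W where "eigenbasis L lam v W"
proof -
  obtain v where nonzero: "\<And>i. v i \<noteq> 0" and eigenvector: "\<And>i. L *v v i = lam i *s v i"
    using assms(1) unfolding is_eigenvalue_def by metis
  define V :: "complex^'n^'n" where "V = (\<chi> k j. v j $ k)"
  have "inj ((*v) V)"
  proof (rule injI)
    fix a b assume "V *v a = V *v b"
    then have "V *v (a - b) = 0" by (simp add: matrix_vector_mult_diff_distrib)
    then have combination: "(\<Sum>j\<in>UNIV. (a - b) $ j *s v j) = 0" by (simp add: V_def matrix_of_columns_mult)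
    have "(a - b) $ j = 0" for j
      by (rule eigenvectors_independent[OF eigenvector nonzero \<open>inj lam\<close> finite combination UNIV_I])
    then show "a = b" by (simp add: vec_eq_iff)
  qed
  then obtain W where left: "W ** V = mat 1" using matrix_left_invertible_injective by blast
  then have right: "V ** W = mat 1" using matrix_left_right_inverse by blast
  show thesis
    by (rule that, unfold_locales) (use eigenvector \<open>inj lam\<close> left right in \<open>simp_all add: V_def\<close>)
qed

context eigenbasis
begin

lemma eigen_expansion: "x = (\<Sum>j\<in>UNIV. (W *v x) $ j *s v j)"
proof -
  have "x = (\<chi> k j. v j $ k) *v (W *v x)"
    by (simp add: matrix_vector_mul_assoc right_inverse)
  then show ?thesis by (simp only: matrix_of_columns_mult)
qed

lemma coords_of_combination: "W *v (\<Sum>j\<in>UNIV. c j *s v j) = (\<chi> j. c j)"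
proof -
  have "(\<Sum>j\<in>UNIV. c j *s v j) = (\<chi> k j. v j $ k) *v (\<chi> j. c j)"
    by (simp add: matrix_of_columns_mult)
  then show ?thesis by (simp add: matrix_vector_mul_assoc left_inverse)
qed

lemma coord_L_diagonal: "(W *v (L *v x)) $ k = lam k * (W *v x) $ k"
proof -
  have "L *v x = L *v (\<Sum>j\<in>UNIV. (W *v x) $ j *s v j)"
    using eigen_expansion by metis
  also have "\<dots> = (\<Sum>j\<in>UNIV. (lam j * (W *v x) $ j) *s v j)"
    by (simp add: vec.sum vector_scalar_commute eigenvector vector_smult_assoc mult.commute)
  finally show ?thesis by (simp add: coords_of_combination)
qed

lemma char_subspace_coord_eq_0:
  assumes "t \<in> char_subspace L (lam j)" and "k \<noteq> j"
  shows "(W *v t) $ k = 0"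
proof -
  define g where "g = (\<lambda>x. L *v x - lam j *s x)"
  have g: "(W *v g u) $ k = (lam k - lam j) * (W *v u) $ k" for u
    unfolding g_def
    by (simp add: matrix_vector_mult_diff_distrib vector_scalar_commute coord_L_diagonal algebra_simps)
  have "(W *v (g ^^ m) u) $ k = (lam k - lam j) ^ m * (W *v u) $ k" for m u
    by (induction m) (simp_all add: g)
  moreover have "(g ^^ CARD('n)) t = 0"
    using assms(1) unfolding char_subspace_def g_def by simp
  ultimately have "(lam k - lam j) ^ CARD('n) * (W *v t) $ k = 0" by (metis vec.zero zero_index)
  moreover have "lam k \<noteq> lam j" using inj_lam assms(2) by (metis injD)
  ultimately show ?thesis by simp
qed

lemma scaled_eigenvector_in_char_subspace: "c *s v i \<in> char_subspace L (lam i)"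
proof -
  define g where "g = (\<lambda>x. L *v x - lam i *s x)"
  have "g (c *s v i) = 0"
    unfolding g_def by (simp add: vector_scalar_commute eigenvector vector_smult_assoc mult.commute)
  moreover have "(g ^^ m) 0 = 0" for m by (induction m) (simp_all add: g_def)
  moreover obtain m where "CARD('n) = Suc m" using gr0_implies_Suc[OF zero_less_card_finite] by blast
  ultimately have "(g ^^ CARD('n)) (c *s v i) = 0" by (simp add: funpow_Suc_right del: funpow.simps)
  then show ?thesis unfolding char_subspace_def g_def by simp
qed

lemma coord_combination_char_subspaces:
  assumes "\<forall>j. t j \<in> char_subspace L (lam j)"
  shows "(W *v (\<Sum>j\<in>UNIV. b j *s t j)) $ k = b k * (W *v t k) $ k"
proof -
  have "(W *v (\<Sum>j\<in>UNIV. b j *s t j)) $ k = (\<Sum>j\<in>UNIV. b j * (W *v t j) $ k)"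
    by (simp add: vec.sum vector_scalar_commute)
  also have "\<dots> = (\<Sum>j\<in>UNIV. if j = k then b k * (W *v t k) $ k else 0)"
  proof (intro sum.cong refl)
    fix j
    show "b j * (W *v t j) $ k = (if j = k then b k * (W *v t k) $ k else 0)"
      using char_subspace_coord_eq_0[of "t j" j k] assms by (cases "j = k") auto
  qed
  finally show ?thesis by simp
qed

lemma monom_coords_combination_char_subspaces:
  assumes "\<forall>j. t j \<in> char_subspace L (lam j)"
  shows "monom s (W *v (\<Sum>j\<in>UNIV. a j *s t j))
           = (\<Prod>j\<in>UNIV. a j ^ s j) * monom s (W *v (\<Sum>j\<in>UNIV. t j))"
  using coord_combination_char_subspaces[OF assms, of a] coord_combination_char_subspaces[OF assms, of "\<lambda>_. 1"]
  unfolding monom_def by (simp add: power_mult_distrib prod.distrib)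

lemma monom_coords_L: "monom s (W *v (L *v x)) = (\<Prod>j\<in>UNIV. lam j ^ s j) * monom s (W *v x)"
  unfolding monom_def by (simp add: coord_L_diagonal power_mult_distrib prod.distrib)

definition eigen_monomial :: "('n \<Rightarrow> nat) \<Rightarrow> 'n \<Rightarrow> complex^'n \<Rightarrow> complex^'n" where
  "eigen_monomial s i x = monom s (W *v x) *s v i"

lemma Hr_eigen_monomial:
  assumes "sum s UNIV = r" shows "(\<lambda>x. c *s eigen_monomial s i x) \<in> Hr r"
proof -
  have "(\<lambda>x. monom s (W *v x) *s (c *s v i)) \<in> Hr r"
    using assms by (rule Hr_monom_precompose_linear)
  then show ?thesis unfolding eigen_monomial_def by (simp add: vector_smult_assoc mult.commute)
qed

lemma eigen_monomial_in_char_subspace: "c *s eigen_monomial s i x \<in> char_subspace L (lam i)"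
  unfolding eigen_monomial_def vector_smult_assoc by (rule scaled_eigenvector_in_char_subspace)

lemma of_type_eigen_monomial:
  assumes "sum s UNIV \<noteq> 0" shows "of_type L lam s (\<lambda>x. c *s eigen_monomial s i x)"
  unfolding of_type_def
proof (intro conjI allI impI)
  obtain k where "s k \<noteq> 0" using assms by (metis sum.neutral)
  then have "monom s (0::complex^'n) = 0" unfolding monom_def by (subst prod_zero_iff) auto
  then show "c *s eigen_monomial s i 0 = 0" by (simp add: eigen_monomial_def)
next
  fix a :: "'n \<Rightarrow> complex" and t :: "'n \<Rightarrow> complex^'n"
  assume "\<forall>j. t j \<in> char_subspace L (lam j)"
  then show "c *s eigen_monomial s i (\<Sum>j\<in>UNIV. a j *s t j) =
      (\<Prod>j\<in>UNIV. a j ^ s j) *s (c *s eigen_monomial s i (\<Sum>j\<in>UNIV. t j))"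
    by (simp add: eigen_monomial_def monom_coords_combination_char_subspaces vector_smult_assoc mult_ac)
qed

lemma MapM_eigen_monomial:
  "MapM L (\<lambda>x. c *s eigen_monomial s i x)
     = (\<lambda>x. (((\<Prod>j\<in>UNIV. lam j ^ s j) - lam i) * c) *s eigen_monomial s i x)"
  unfolding MapM_def eigen_monomial_def
  by (simp add: fun_eq_iff vec_eq_iff monom_coords_L vector_scalar_commute eigenvector algebra_simps)

lemma Hr_eigen_monomial_expansion:
  assumes "G \<in> Hr r"
  obtains D where "\<And>x. G x = (\<Sum>i\<in>UNIV. \<Sum>s\<in>{s. sum s UNIV = r}. D i s *s eigen_monomial s i x)"
proof -
  have "(\<lambda>z. G ((\<chi> k j. v j $ k) *v z)) \<in> Hr r"
    using assms by (rule Hr_precompose_linear)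
  then obtain c where c: "\<And>z. G ((\<chi> k j. v j $ k) *v z) = (\<Sum>\<alpha>\<in>{\<alpha>. sum \<alpha> UNIV = r}. monom \<alpha> z *s c \<alpha>)"
    unfolding Hr_def hom_poly_def monom_def by blast
  have "G x = (\<Sum>i\<in>UNIV. \<Sum>\<alpha>\<in>{\<alpha>. sum \<alpha> UNIV = r}. (W *v c \<alpha>) $ i *s eigen_monomial \<alpha> i x)" for x
  proof -
    have "G x = G ((\<chi> k j. v j $ k) *v (W *v x))"
      by (simp add: matrix_vector_mul_assoc right_inverse)
    also have "\<dots> = (\<Sum>\<alpha>\<in>{\<alpha>. sum \<alpha> UNIV = r}. monom \<alpha> (W *v x) *s (\<Sum>i\<in>UNIV. (W *v c \<alpha>) $ i *s v i))"
      by (simp only: c flip: eigen_expansion)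
    also have "\<dots> = (\<Sum>\<alpha>\<in>{\<alpha>. sum \<alpha> UNIV = r}. \<Sum>i\<in>UNIV. (W *v c \<alpha>) $ i *s eigen_monomial \<alpha> i x)"
      by (simp add: eigen_monomial_def sum_cmul[symmetric] vector_smult_assoc mult.commute)
    finally show ?thesis by (simp only: sum.swap[of _ "{\<alpha>. sum \<alpha> UNIV = r}"])
  qed
  then show thesis by (rule that)
qed

lemma eigen_monomial_sum_in_SR:
  assumes "1 \<le> r"
  shows "(\<lambda>x. \<Sum>i\<in>UNIV. \<Sum>s\<in>{s. sum s UNIV = r \<and> subres_ok lam i s}. D i s *s eigen_monomial s i x)
           \<in> SR L lam r"
proof -
  \<comment> \<open>SR asks for the properties of Q i s for every s, not only for those summed over\<close>
  define Q where "Q i s = (if sum s UNIV = r then (\<lambda>x. D i s *s eigen_monomial s i x) else (\<lambda>_. 0))"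
    for i s
  have "Q i s \<in> Hr r \<and> of_type L lam s (Q i s) \<and> (\<forall>x. Q i s x \<in> char_subspace L (lam i))" for i s
  proof (cases "sum s UNIV = r")
    case True
    then show ?thesis using assms
      by (simp add: Q_def Hr_eigen_monomial of_type_eigen_monomial eigen_monomial_in_char_subspace)
  next
    case False
    then show ?thesis using Hr_zero scaled_eigenvector_in_char_subspace[of 0 i]
      by (simp add: Q_def of_type_def)
  qed
  moreover have "(\<lambda>x. \<Sum>i\<in>UNIV. \<Sum>s\<in>{s. sum s UNIV = r \<and> subres_ok lam i s}. D i s *s eigen_monomial s i x)
                   \<in> Hr r"
  proof -
    have "finite {s. sum s UNIV = r \<and> subres_ok lam i s}" for i
      by (rule finite_subset[OF _ finite_multi_indices[of r]]) auto
    then show ?thesis by (intro Hr_sum) (auto intro: Hr_eigen_monomial)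
  qed
  ultimately show ?thesis
    unfolding SR_def by (intro CollectI conjI exI[of _ Q]) (auto simp: Q_def)
qed

lemma eigen_monomial_sum_in_range_MapM:
  assumes "\<And>i. N i \<subseteq> {s. sum s UNIV = r}"
    and "\<And>i s. s \<in> N i \<Longrightarrow> (\<Prod>j\<in>UNIV. lam j ^ s j) \<noteq> lam i"
  shows "(\<lambda>x. \<Sum>i\<in>UNIV. \<Sum>s\<in>N i. D i s *s eigen_monomial s i x) \<in> MapM L ` Hr r"
proof (rule rev_image_eqI)
  define h where "h x = (\<Sum>i\<in>UNIV. \<Sum>s\<in>N i.
    (D i s / ((\<Prod>j\<in>UNIV. lam j ^ s j) - lam i)) *s eigen_monomial s i x)" for x
  have finite: "finite (N i)" for i
    using assms(1) finite_multi_indices by (rule finite_subset)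
  show "h \<in> Hr r"
    unfolding h_def using assms(1) by (intro Hr_sum finite Hr_eigen_monomial) auto
  show "(\<lambda>x. \<Sum>i\<in>UNIV. \<Sum>s\<in>N i. D i s *s eigen_monomial s i x) = MapM L h"
    unfolding h_def MapM_sum MapM_eigen_monomial using assms(2) by simp
qed


lemma Hr_decomposition:
  assumes "1 \<le> r" and "\<forall>j. lam j \<noteq> 0" and "G \<in> Hr r"
  obtains P H where "G = (\<lambda>x. P x + H x)" and "P \<in> SR L lam r" and "H \<in> MapM L ` Hr r"
proof -
  obtain D
    where D: "\<And>x. G x = (\<Sum>i\<in>UNIV. \<Sum>s\<in>{s. sum s UNIV = r}. D i s *s eigen_monomial s i x)"
    using Hr_eigen_monomial_expansion[OF assms(3)] by blast
  define P where "P = (\<lambda>x. \<Sum>i\<in>UNIV. \<Sum>s\<in>{s. sum s UNIV = r \<and> subres_ok lam i s}.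
                          D i s *s eigen_monomial s i x)"
  define H where "H = (\<lambda>x. \<Sum>i\<in>UNIV. \<Sum>s\<in>{s. sum s UNIV = r \<and> \<not> subres_ok lam i s}.
                          D i s *s eigen_monomial s i x)"
  have "G = (\<lambda>x. P x + H x)"
    unfolding P_def H_def
    by (simp add: fun_eq_iff D sum.distrib[symmetric])
      (intro allI sum.cong refl sum_Collect_conj_split finite_multi_indices)
  moreover have "P \<in> SR L lam r"
    unfolding P_def using assms(1) by (rule eigen_monomial_sum_in_SR)
  moreover have "H \<in> MapM L ` Hr r"
    unfolding H_def using not_subres_ok_imp_nonresonant[OF assms(2)]
    by (intro eigen_monomial_sum_in_range_MapM) auto
  ultimately show thesis by (rule that)
qed

end

theorem proposition3p8:
  fixes L :: "complex^'n^'n" and lam :: "'n \<Rightarrow> complex" and r :: nat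
  assumes "invertible L"
    and "\<forall>i. is_eigenvalue L (lam i)"
    and "\<forall>\<mu>. is_eigenvalue L \<mu> \<longrightarrow> (\<exists>i. \<mu> = lam i)"
    and "inj (\<lambda>i. cmod (lam i))"
    and "\<forall>i. 0 < cmod (lam i) \<and> cmod (lam i) < 1"
    and "r \<ge> 1"
  shows "{(\<lambda>x. P x + G x) | P G. P \<in> SR L lam r \<and> G \<in> MapM L ` Hr r} = Hr r"
proof
  show "{(\<lambda>x. P x + G x) | P G. P \<in> SR L lam r \<and> G \<in> MapM L ` Hr r} \<subseteq> Hr r"
    unfolding SR_def by (auto intro!: Hr_add MapM_Hr)
next
  have nonzero: "\<forall>j. lam j \<noteq> 0" using assms(5) by auto
  have "inj lam" using assms(4) inj_on_imageI2[of cmod lam UNIV] by (simp add: comp_def)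
  then obtain v W where "eigenbasis L lam v W" using eigenbasis_exists assms(2) by blast
  then show "Hr r \<subseteq> {(\<lambda>x. P x + G x) | P G. P \<in> SR L lam r \<and> G \<in> MapM L ` Hr r}"
    using eigenbasis.Hr_decomposition[OF _ assms(6) nonzero] by blast
qed

end
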